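(* Let $(h,n)=(4,2)$, let $K=\{id,(12)(34),(13)(24),(14)(23)\}\leq S_4$ be the Klein group and $U=K\times\{id\}\leq S_4\times S_2$. Then $U$ is regular, but $U$ is neither a symmetry group nor an anonymity group with respect to $(4,2)$.
   Context: Permutations compose as $(\sigma\tau)(x)=\sigma(\tau(x))$. Let $G=S_h\times S_n$ and $\mathcal{P}=(S_n)^h$ (preference profiles), with $G$ acting by $(p^{(\varphi,\psi)})_i=\psi\,p_{\varphi^{-1}(i)}$. A subgroup $U\leq G$ is regular if for every $p\in\mathcal{P}$, $\mathrm{Stab}_U(p)=\{g\in U:p^g=p\}\subseteq S_h\times\{id\}$. A social preference function (SPF) is any $F:\mathcal{P}\to S_n$; its symmetry group is $G(F)=\{(\varphi,\psi)\in G: F(p^{(\varphi,\psi)})=\psi F(p)\ \forall p\}$ and its anonymity group is $G_1(F)=G(F)\cap(S_h\times\{id\})$. $U$ is a symmetry group (resp. anonymity group) with respect to $(h,n)$ if $U=G(F)$ (resp. $U=G_1(F)$) for some SPF $F$. *)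

theory Defs
  imports "HOL-Combinatorics.Combinatorics"
begin

text \<open>Permutations of {1..n}, as functions nat => nat fixing everything outside {1..n}.
Composition is function composition: (s o t) x = s (t x).\<close>

definition Sym :: "nat \<Rightarrow> (nat \<Rightarrow> nat) set" where
  "Sym n = {s. s permutes {1..n}}"

definition profiles :: "nat \<Rightarrow> nat \<Rightarrow> (nat \<Rightarrow> nat \<Rightarrow> nat) set" where
  "profiles h n = {p. (\<forall>i\<in>{1..h}. p i \<in> Sym n) \<and> (\<forall>i. i \<notin> {1..h} \<longrightarrow> p i = id)}"

definition Gr :: "nat \<Rightarrow> nat \<Rightarrow> ((nat \<Rightarrow> nat) \<times> (nat \<Rightarrow> nat)) set" where
  "Gr h n = Sym h \<times> Sym n"

definition act :: "nat \<Rightarrow> (nat \<Rightarrow> nat) \<times> (nat \<Rightarrow> nat) \<Rightarrow> (nat \<Rightarrow> nat \<Rightarrow> nat) \<Rightarrow> (nat \<Rightarrow> nat \<Rightarrow> nat)" where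
  "act h g p = (\<lambda>i. if i \<in> {1..h} then snd g \<circ> p (inv (fst g) i) else id)"

definition regular :: "nat \<Rightarrow> nat \<Rightarrow> ((nat \<Rightarrow> nat) \<times> (nat \<Rightarrow> nat)) set \<Rightarrow> bool" where
  "regular h n U \<longleftrightarrow> (\<forall>p\<in>profiles h n. {g\<in>U. act h g p = p} \<subseteq> Sym h \<times> {id})"

definition SPF :: "nat \<Rightarrow> nat \<Rightarrow> ((nat \<Rightarrow> nat \<Rightarrow> nat) \<Rightarrow> (nat \<Rightarrow> nat)) \<Rightarrow> bool" where
  "SPF h n F \<longleftrightarrow> (\<forall>p\<in>profiles h n. F p \<in> Sym n)"

definition symgroup :: "nat \<Rightarrow> nat \<Rightarrow> ((nat \<Rightarrow> nat \<Rightarrow> nat) \<Rightarrow> (nat \<Rightarrow> nat)) \<Rightarrow> ((nat \<Rightarrow> nat) \<times> (nat \<Rightarrow> nat)) set" where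
  "symgroup h n F = {g\<in>Gr h n. \<forall>p\<in>profiles h n. F (act h g p) = snd g \<circ> F p}"

definition anongroup :: "nat \<Rightarrow> nat \<Rightarrow> ((nat \<Rightarrow> nat \<Rightarrow> nat) \<Rightarrow> (nat \<Rightarrow> nat)) \<Rightarrow> ((nat \<Rightarrow> nat) \<times> (nat \<Rightarrow> nat)) set" where
  "anongroup h n F = symgroup h n F \<inter> (Sym h \<times> {id})"

definition is_symmetry_group :: "nat \<Rightarrow> nat \<Rightarrow> ((nat \<Rightarrow> nat) \<times> (nat \<Rightarrow> nat)) set \<Rightarrow> bool" where
  "is_symmetry_group h n U \<longleftrightarrow> (\<exists>F. SPF h n F \<and> U = symgroup h n F)"

definition is_anonymity_group :: "nat \<Rightarrow> nat \<Rightarrow> ((nat \<Rightarrow> nat) \<times> (nat \<Rightarrow> nat)) set \<Rightarrow> bool" where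
  "is_anonymity_group h n U \<longleftrightarrow> (\<exists>F. SPF h n F \<and> U = anongroup h n F)"

definition Klein :: "(nat \<Rightarrow> nat) set" where
  "Klein = {id, transpose 1 2 \<circ> transpose 3 4, transpose 1 3 \<circ> transpose 2 4,
            transpose 1 4 \<circ> transpose 2 3}"

end

theory Submission
  imports Defs
begin

text \<open>Since \<open>S\<^sub>2\<close> has two elements, a social preference function for four voters and two
alternatives is a two-valued function of four bits. Invariance under the Klein group \<open>K\<close> makes it
constant on the three \<open>K\<close>-orbits \<open>{12, 34}, {13, 24}, {14, 23}\<close> of two-element sets of voters.
Being two-valued, it agrees on two of these orbits, and then it is also invariant under the
transposition \<open>(1 a)\<close> merging them. So every \<open>F\<close> with \<open>K \<times> {id} \<subseteq> G(F)\<close> has an anonymity group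
strictly larger than \<open>K \<times> {id}\<close>. A symmetry group inside \<open>S\<^sub>h \<times> {id}\<close> is the anonymity group of
the same \<open>F\<close>, and regularity is trivial since \<open>U\<close> does not move the alternatives.\<close>

lemma voter_perm_in_symgroup_iff:
  assumes "\<sigma> \<in> Sym h"
  shows "(\<sigma>, id) \<in> symgroup h n F \<longleftrightarrow> (\<forall>p\<in>profiles h n. F (act h (\<sigma>, id) p) = F p)"
  using assms by (auto simp: symgroup_def Gr_def Sym_def)

lemma transpose_in_Sym: "x \<in> {1..h} \<Longrightarrow> y \<in> {1..h} \<Longrightarrow> transpose x y \<in> Sym h"
  by (simp add: Sym_def permutes_swap_id)

lemma regular_if_subset_Sym_id: "U \<subseteq> Sym h \<times> {id} \<Longrightarrow> regular h n U"
  by (auto simp: regular_def)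

lemma anonymity_group_if_symmetry_group:
  assumes "U \<subseteq> Sym h \<times> {id}" and "is_symmetry_group h n U"
  shows "is_anonymity_group h n U"
  using assms unfolding is_symmetry_group_def is_anonymity_group_def anongroup_def by blast

lemma Sym_2_eq: "Sym 2 = {id, transpose 1 2}"
proof
  show "{id, transpose 1 2} \<subseteq> Sym 2"
    by (auto simp: Sym_def intro: permutes_swap_id)
next
  show "Sym 2 \<subseteq> {id, transpose 1 2}"
  proof
    fix s assume "s \<in> Sym 2"
    moreover have "{1..2::nat} = {1, 2}" by auto
    ultimately have s: "s permutes {1, 2}" by (simp add: Sym_def)
    have out: "s x = x" if "x \<notin> {1, 2}" for x
      using permutes_not_in[OF s that] .
    have "s 1 \<in> {1, 2}" "s 2 \<in> {1, 2}"
      using permutes_in_image[OF s] by simp_all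
    moreover have "s 1 \<noteq> s 2"
      using permutes_inj[OF s] by (simp add: inj_eq)
    ultimately have "s x = (if s 1 = 1 then id else transpose 1 2) x" for x
      using out[of x] by (cases "x = 1"; cases "x = 2") auto
    then have "s = (if s 1 = 1 then id else transpose 1 2)" ..
    then show "s \<in> {id, transpose 1 2}" by (metis insertCI)
  qed
qed

lemma Klein_subset_Sym: "Klein \<subseteq> Sym 4"
  unfolding Klein_def Sym_def by (auto intro!: permutes_compose permutes_swap_id)

lemma transpose_not_in_Klein:
  assumes "x \<in> {2, 3, 4}"
  shows "transpose 1 x \<notin> Klein"
proof
  have "(k 1, k 2, k 3) \<in> {(1, 2, 3), (2, 1, 4), (3, 4, 1), (4, 3, 2)}"
    if "k \<in> Klein" for k :: "nat \<Rightarrow> nat"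
    using that by (auto simp: Klein_def)
  moreover assume "transpose 1 x \<in> Klein"
  ultimately show False using assms by fastforce
qed

definition profile4 :: "(nat \<Rightarrow> nat) \<Rightarrow> (nat \<Rightarrow> nat) \<Rightarrow> (nat \<Rightarrow> nat) \<Rightarrow> (nat \<Rightarrow> nat) \<Rightarrow> nat \<Rightarrow> nat \<Rightarrow> nat" where
  "profile4 p1 p2 p3 p4 = (\<lambda>i. if i = 1 then p1 else if i = 2 then p2 else if i = 3 then p3
                                else if i = 4 then p4 else id)"

definition pref :: "bool \<Rightarrow> nat \<Rightarrow> nat" where
  "pref b = (if b then transpose 1 2 else id)"

lemma pref_in_Sym_2: "pref b \<in> Sym 2"
  by (simp add: pref_def Sym_2_eq)

lemma pref_profile_in_profiles: "profile4 (pref a) (pref b) (pref c) (pref d) \<in> profiles 4 2"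
  unfolding profiles_def profile4_def using pref_in_Sym_2 by auto

lemma profiles_4_2_cases:
  assumes "p \<in> profiles 4 2"
  obtains a b c d where "p = profile4 (pref a) (pref b) (pref c) (pref d)"
proof -
  let ?bit = "\<lambda>i. p i \<noteq> id"
  have "p i \<in> {id, transpose 1 2}" if "i \<in> {1..4}" for i
    using assms that by (simp add: profiles_def Sym_2_eq)
  then have inside: "p i = pref (?bit i)" if "i \<in> {1..4}" for i
    using that by (auto simp: pref_def)
  have outside: "p i = id" if "i \<notin> {1..4}" for i
    using assms that by (simp add: profiles_def)
  have "p i = profile4 (pref (?bit 1)) (pref (?bit 2)) (pref (?bit 3)) (pref (?bit 4)) i" for i
    using inside[of i] outside[of i] unfolding profile4_def
    by (cases "i = 1"; cases "i = 2"; cases "i = 3"; cases "i = 4") simp_all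
  then have "p = profile4 (pref (?bit 1)) (pref (?bit 2)) (pref (?bit 3)) (pref (?bit 4))" ..
  then show thesis by (rule that)
qed

lemma act_voters_profile4:
  "act 4 (\<sigma>, id) p = profile4 (p (inv \<sigma> 1)) (p (inv \<sigma> 2)) (p (inv \<sigma> 3)) (p (inv \<sigma> 4))"
  by (auto simp: act_def profile4_def fun_eq_iff)

lemma inv_transpose_comp: "inv (transpose a b \<circ> transpose c d) = transpose c d \<circ> transpose a b"
  by (simp add: o_inv_distrib)

lemma Klein_invariant_two_valued_imp_transposition_invariant:
  fixes G :: "bool \<Rightarrow> bool \<Rightarrow> bool \<Rightarrow> bool \<Rightarrow> 'a"
  assumes two_valued: "\<And>a b c d. G a b c d \<in> {u, v}"
    and K1: "\<And>a b c d. G a b c d = G b a d c"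
    and K2: "\<And>a b c d. G a b c d = G c d a b"
  shows "(\<forall>a b c d. G a b c d = G b a c d) \<or> (\<forall>a b c d. G a b c d = G c b a d)
    \<or> (\<forall>a b c d. G a b c d = G d b c a)"
proof -
  \<comment> \<open>pigeonhole on the values at the 2-sets \<open>{1,2}, {1,3}, {1,4}\<close>, one in each \<open>K\<close>-orbit\<close>
  consider "G True False True False = G True False False True"
    | "G True True False False = G True False False True"
    | "G True True False False = G True False True False"
    using two_valued[of True True False False] two_valued[of True False True False]
      two_valued[of True False False True] by auto
  then show ?thesis
  proof cases
    case 1
    then have "G a b c d = G b a c d" for a b c d
      by (cases a; cases b; cases c; cases d) (metis K1 K2)+
    then show ?thesis by blast
  next
    case 2
    then have "G a b c d = G c b a d" for a b c d
      by (cases a; cases b; cases c; cases d) (metis K1 K2)+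
    then show ?thesis by blast
  next
    case 3
    then have "G a b c d = G d b c a" for a b c d
      by (cases a; cases b; cases c; cases d) (metis K1 K2)+
    then show ?thesis by blast
  qed
qed

lemma Klein_symmetric_SPF_has_transposition:
  assumes F: "SPF 4 2 F" and Klein: "Klein \<times> {id} \<subseteq> symgroup 4 2 F"
  shows "\<exists>x\<in>{2, 3, 4}. (transpose 1 x, id) \<in> symgroup 4 2 F"
proof -
  define G where "G a b c d = F (profile4 (pref a) (pref b) (pref c) (pref d))" for a b c d
  have two_valued: "G a b c d \<in> {id, transpose 1 2}" for a b c d
    using F pref_profile_in_profiles unfolding SPF_def G_def Sym_2_eq by blast
  have Klein_invariant: "F (act 4 (k, id) (profile4 (pref a) (pref b) (pref c) (pref d))) = G a b c d"
    if "k \<in> Klein" for k a b c d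
  proof -
    have "k \<in> Sym 4" and "(k, id) \<in> symgroup 4 2 F"
      using Klein that Klein_subset_Sym by blast+
    then show ?thesis
      unfolding G_def by (simp add: voter_perm_in_symgroup_iff pref_profile_in_profiles)
  qed
  have K1: "G a b c d = G b a d c" for a b c d
    using Klein_invariant[of "transpose 1 2 \<circ> transpose 3 4" a b c d]
    by (simp add: Klein_def G_def act_voters_profile4 inv_transpose_comp profile4_def)
  have K2: "G a b c d = G c d a b" for a b c d
    using Klein_invariant[of "transpose 1 3 \<circ> transpose 2 4" a b c d]
    by (simp add: Klein_def G_def act_voters_profile4 inv_transpose_comp profile4_def)
  have symmetric_if_bits: "(\<sigma>, id) \<in> symgroup 4 2 F"
    if "\<sigma> \<in> Sym 4"
      and "\<And>a b c d. F (act 4 (\<sigma>, id) (profile4 (pref a) (pref b) (pref c) (pref d))) = G a b c d"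
    for \<sigma>
    unfolding voter_perm_in_symgroup_iff[OF that(1)]
  proof
    fix p assume "p \<in> profiles 4 2"
    then show "F (act 4 (\<sigma>, id) p) = F p"
      by (rule profiles_4_2_cases) (simp add: that(2) G_def)
  qed
  from Klein_invariant_two_valued_imp_transposition_invariant[of G, OF two_valued K1 K2] show ?thesis
  proof (elim disjE)
    assume "\<forall>a b c d. G a b c d = G b a c d"
    then have "(transpose 1 2, id) \<in> symgroup 4 2 F"
      by (intro symmetric_if_bits) (simp_all add: transpose_in_Sym act_voters_profile4 profile4_def G_def)
    then show ?thesis by blast
  next
    assume "\<forall>a b c d. G a b c d = G c b a d"
    then have "(transpose 1 3, id) \<in> symgroup 4 2 F"
      by (intro symmetric_if_bits) (simp_all add: transpose_in_Sym act_voters_profile4 profile4_def G_def)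
    then show ?thesis by blast
  next
    assume "\<forall>a b c d. G a b c d = G d b c a"
    then have "(transpose 1 4, id) \<in> symgroup 4 2 F"
      by (intro symmetric_if_bits) (simp_all add: transpose_in_Sym act_voters_profile4 profile4_def G_def)
    then show ?thesis by blast
  qed
qed

lemma Klein_not_anonymity_group: "\<not> is_anonymity_group 4 2 (Klein \<times> {id})"
proof
  assume "is_anonymity_group 4 2 (Klein \<times> {id})"
  then obtain F where F: "SPF 4 2 F" and U: "Klein \<times> {id} = anongroup 4 2 F"
    unfolding is_anonymity_group_def by blast
  then have "Klein \<times> {id} \<subseteq> symgroup 4 2 F"
    unfolding anongroup_def by blast
  then obtain x where x: "x \<in> {2, 3, 4}" and "(transpose 1 x, id) \<in> symgroup 4 2 F"
    using Klein_symmetric_SPF_has_transposition[OF F] by blast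
  moreover have "transpose 1 x \<in> Sym 4"
    using x by (auto intro: transpose_in_Sym)
  ultimately have "transpose 1 x \<in> Klein"
    using U unfolding anongroup_def by blast
  with x show False
    using transpose_not_in_Klein by blast
qed

theorem mainTheorem8:
  shows "regular 4 2 (Klein \<times> {id}) \<and> \<not> is_symmetry_group 4 2 (Klein \<times> {id})
         \<and> \<not> is_anonymity_group 4 2 (Klein \<times> {id})"
proof (intro conjI)
  have anonymous: "Klein \<times> {id} \<subseteq> Sym 4 \<times> {id}"
    using Klein_subset_Sym by blast
  then show "regular 4 2 (Klein \<times> {id})"
    by (rule regular_if_subset_Sym_id)
  show "\<not> is_symmetry_group 4 2 (Klein \<times> {id})"
    using anonymity_group_if_symmetry_group[OF anonymous] Klein_not_anonymity_group by blast
  show "\<not> is_anonymity_group 4 2 (Klein \<times> {id})"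
    by (rule Klein_not_anonymity_group)
qed

end
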